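(* Let $k$ be a field and let $X$ be a $\mathcal{T}$-space which is locally weakly quasi-compact. Let $F\in\mathrm{Mod}(k_\mathcal{T})$ and let $U\subseteq X$ be open. Then $$\Gamma(U;\rho^{-1}F)\simeq\varprojlim_{V\subset\subset U,\,V\in\mathcal{T}}\Gamma(V;F).$$
   Context: For open subsets $V\subseteq U$ of a topological space $X$, write $V\subset\subset U$ if for every covering $\{U_i\}_{i\in I}$ of $U$ by open sets there is a finite $J\subseteq I$ with $V\subseteq\bigcup_{i\in J}U_i$; $\mathrm{Op}^c(U)$ is the set of such $V$. $X$ is locally weakly quasi-compact if for all open $U,V$: (LWC1) every $x\in U$ has a fundamental system of neighborhoods in $\mathrm{Op}^c(U)$; (LWC2) for $U'\in\mathrm{Op}^c(U)$, $V'\in\mathrm{Op}^c(V)$ one has $U'\cap V'\in\mathrm{Op}^c(U\cap V)$; (LWC3) for every $U'\in\mathrm{Op}^c(U)$ there is $W\in\mathrm{Op}^c(U)$ with $U'\subset\subset W$. Let $\mathcal{T}$ be a family of open subsets of $X$. A $\mathcal{T}$-subset of $X$ is a finite Boolean combination of elements of $\mathcal{T}$; a $\mathcal{T}$-connected subset is a $\mathcal{T}$-subset which is not the disjoint union of two proper $\mathcal{T}$-subsets that are both open and closed in it. $X$ is a $\mathcal{T}$-space if (i) $\mathcal{T}$ is a basis of the topology of $X$ and $\emptyset\in\mathcal{T}$; (ii) $\mathcal{T}$ is closed under finite unions and finite intersections; (iii) every $U\in\mathcal{T}$ has finitely many $\mathcal{T}$-connected components. $X_\mathcal{T}$ is the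 site whose underlying category is $\mathcal{T}$ (morphisms are inclusions), a family $\{U_i\}\subset\mathcal{T}$ of subsets of $U\in\mathcal{T}$ being a covering of $U$ iff it admits a finite subfamily whose union is $U$. $\mathrm{Mod}(k_\mathcal{T})$ (resp. $\mathrm{Mod}(k_X)$) is the category of sheaves of $k$-vector spaces on $X_\mathcal{T}$ (resp. $X$). $\rho:X\to X_\mathcal{T}$ is the natural morphism of sites, $\rho_*F(U)=F(U)$ for $U\in\mathcal{T}$, and $\rho^{-1}:\mathrm{Mod}(k_\mathcal{T})\to\mathrm{Mod}(k_X)$ is the left adjoint of $\rho_*$. *)

theory Defs
  imports "HOL-Analysis.Analysis"
begin

definition relcomp :: "'a topology \<Rightarrow> 'a set \<Rightarrow> 'a set \<Rightarrow> bool" where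
  "relcomp X V U \<longleftrightarrow> openin X V \<and> openin X U \<and> V \<subseteq> U \<and>
     (\<forall>\<U>. (\<forall>W\<in>\<U>. openin X W) \<and> \<Union>\<U> = U \<longrightarrow>
        (\<exists>\<J>\<subseteq>\<U>. finite \<J> \<and> V \<subseteq> \<Union>\<J>))"

definition loc_weakly_qc :: "'a topology \<Rightarrow> bool" where
  "loc_weakly_qc X \<longleftrightarrow>
     (\<forall>U x. openin X U \<and> x \<in> U \<longrightarrow>
        (\<forall>N. openin X N \<and> x \<in> N \<longrightarrow> (\<exists>V. relcomp X V U \<and> x \<in> V \<and> V \<subseteq> N))) \<and>
     (\<forall>U V U' V'. relcomp X U' U \<and> relcomp X V' V \<longrightarrow> relcomp X (U' \<inter> V') (U \<inter> V)) \<and>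
     (\<forall>U U'. relcomp X U' U \<longrightarrow> (\<exists>W. relcomp X W U \<and> relcomp X U' W))"

inductive_set tsubsets :: "'a topology \<Rightarrow> 'a set set \<Rightarrow> 'a set set" for X T where
  base: "W \<in> T \<Longrightarrow> W \<in> tsubsets X T"
| compl: "A \<in> tsubsets X T \<Longrightarrow> topspace X - A \<in> tsubsets X T"
| union: "A \<in> tsubsets X T \<Longrightarrow> B \<in> tsubsets X T \<Longrightarrow> A \<union> B \<in> tsubsets X T"

definition tconnected :: "'a topology \<Rightarrow> 'a set set \<Rightarrow> 'a set \<Rightarrow> bool" where
  "tconnected X T S \<longleftrightarrow> S \<in> tsubsets X T \<and>
     \<not> (\<exists>A B. A \<in> tsubsets X T \<and> B \<in> tsubsets X T \<and> A \<subset> S \<and> B \<subset> S \<and>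
            A \<inter> B = {} \<and> A \<union> B = S \<and>
            openin (subtopology X S) A \<and> closedin (subtopology X S) A \<and>
            openin (subtopology X S) B \<and> closedin (subtopology X S) B)"

definition tcomponents :: "'a topology \<Rightarrow> 'a set set \<Rightarrow> 'a set \<Rightarrow> 'a set set" where
  "tcomponents X T U = {C. C \<subseteq> U \<and> tconnected X T C \<and>
     (\<forall>D. C \<subseteq> D \<and> D \<subseteq> U \<and> tconnected X T D \<longrightarrow> D = C)}"

definition tspace :: "'a topology \<Rightarrow> 'a set set \<Rightarrow> bool" where
  "tspace X T \<longleftrightarrow>
     (\<forall>W\<in>T. openin X W) \<and>
     (\<forall>U x. openin X U \<and> x \<in> U \<longrightarrow> (\<exists>W\<in>T. x \<in> W \<and> W \<subseteq> U)) \<and>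
     {} \<in> T \<and>
     (\<forall>A\<in>T. \<forall>B\<in>T. A \<union> B \<in> T \<and> A \<inter> B \<in> T) \<and>
     (\<forall>U\<in>T. finite (tcomponents X T U))"

text \<open>A presheaf F of k-vector spaces on T is given by the subspaces sec W of an
  ambient k-vector space 'v (W in T) and linear restriction maps res W W'.\<close>
definition tpresheaf :: "'a set set \<Rightarrow> ('k::field \<Rightarrow> 'v::ab_group_add \<Rightarrow> 'v)
     \<Rightarrow> ('a set \<Rightarrow> 'v set) \<Rightarrow> ('a set \<Rightarrow> 'a set \<Rightarrow> 'v \<Rightarrow> 'v) \<Rightarrow> bool" where
  "tpresheaf T sc sec res \<longleftrightarrow>
     (\<forall>W\<in>T. 0 \<in> sec W \<and> (\<forall>s\<in>sec W. \<forall>t\<in>sec W. s + t \<in> sec W) \<and>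
        (\<forall>c. \<forall>s\<in>sec W. sc c s \<in> sec W)) \<and>
     (\<forall>W\<in>T. \<forall>W'\<in>T. W' \<subseteq> W \<longrightarrow>
        (\<forall>s\<in>sec W. res W W' s \<in> sec W') \<and>
        (\<forall>s\<in>sec W. \<forall>t\<in>sec W. res W W' (s + t) = res W W' s + res W W' t) \<and>
        (\<forall>c. \<forall>s\<in>sec W. res W W' (sc c s) = sc c (res W W' s))) \<and>
     (\<forall>W\<in>T. \<forall>s\<in>sec W. res W W s = s) \<and>
     (\<forall>W\<in>T. \<forall>W'\<in>T. \<forall>W''\<in>T. W'' \<subseteq> W' \<and> W' \<subseteq> W \<longrightarrow>
        (\<forall>s\<in>sec W. res W' W'' (res W W' s) = res W W'' s))"

definition tcovering :: "'a set set \<Rightarrow> 'a set \<Rightarrow> 'a set set \<Rightarrow> bool" where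
  "tcovering T W \<U> \<longleftrightarrow> \<U> \<subseteq> T \<and> (\<forall>V\<in>\<U>. V \<subseteq> W) \<and>
     (\<exists>\<J>\<subseteq>\<U>. finite \<J> \<and> \<Union>\<J> = W)"

definition tsheaf :: "'a set set \<Rightarrow> ('k::field \<Rightarrow> 'v::ab_group_add \<Rightarrow> 'v)
     \<Rightarrow> ('a set \<Rightarrow> 'v set) \<Rightarrow> ('a set \<Rightarrow> 'a set \<Rightarrow> 'v \<Rightarrow> 'v) \<Rightarrow> bool" where
  "tsheaf T sc sec res \<longleftrightarrow> tpresheaf T sc sec res \<and>
     (\<forall>W\<in>T. \<forall>\<U>. tcovering T W \<U> \<longrightarrow>
        (\<forall>s\<in>sec W. \<forall>t\<in>sec W. (\<forall>V\<in>\<U>. res W V s = res W V t) \<longrightarrow> s = t) \<and>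
        (\<forall>f. (\<forall>V\<in>\<U>. f V \<in> sec V) \<and>
             (\<forall>V\<in>\<U>. \<forall>V'\<in>\<U>. res V (V \<inter> V') (f V) = res V' (V \<inter> V') (f V')) \<longrightarrow>
             (\<exists>s\<in>sec W. \<forall>V\<in>\<U>. res W V s = f V)))"

text \<open>Germ at x of the section t over W (W in T, x in W): the class of (W,t) in the
  stalk colim_{x in W' in T} F(W'), which is the stalk of rho^{-1} F at x.\<close>
definition germ :: "'a set set \<Rightarrow> ('a set \<Rightarrow> 'v set) \<Rightarrow> ('a set \<Rightarrow> 'a set \<Rightarrow> 'v \<Rightarrow> 'v)
     \<Rightarrow> 'a \<Rightarrow> 'a set \<Rightarrow> 'v \<Rightarrow> ('a set \<times> 'v) set" where
  "germ T sec res x W t = {(W', t'). W' \<in> T \<and> x \<in> W' \<and> t' \<in> sec W' \<and>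
     (\<exists>W''\<in>T. x \<in> W'' \<and> W'' \<subseteq> W \<inter> W' \<and> res W W'' t = res W' W'' t')}"

text \<open>Sections of rho^{-1} F (the sheafification of U \<mapsto> colim_{U \<subseteq> W \<in> T} F(W)) over an
  open U: germ-valued functions on U that are locally germs of sections of F.\<close>
definition inv_sections :: "'a set set \<Rightarrow> ('a set \<Rightarrow> 'v set) \<Rightarrow> ('a set \<Rightarrow> 'a set \<Rightarrow> 'v \<Rightarrow> 'v)
     \<Rightarrow> 'a set \<Rightarrow> ('a \<Rightarrow> ('a set \<times> 'v) set) set" where
  "inv_sections T sec res U = {s. (\<forall>x. x \<notin> U \<longrightarrow> s x = {}) \<and>
     (\<forall>x\<in>U. \<exists>W\<in>T. \<exists>t\<in>sec W. x \<in> W \<and> W \<subseteq> U \<and> (\<forall>y\<in>W. s y = germ T sec res y W t))}"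

definition germ_add :: "'a set set \<Rightarrow> ('a set \<Rightarrow> 'v::ab_group_add set) \<Rightarrow> ('a set \<Rightarrow> 'a set \<Rightarrow> 'v \<Rightarrow> 'v)
     \<Rightarrow> 'a \<Rightarrow> ('a set \<times> 'v) set \<Rightarrow> ('a set \<times> 'v) set \<Rightarrow> ('a set \<times> 'v) set" where
  "germ_add T sec res x g1 g2 = (SOME g. \<exists>W t1 t2. W \<in> T \<and> x \<in> W \<and> t1 \<in> sec W \<and> t2 \<in> sec W \<and>
      g1 = germ T sec res x W t1 \<and> g2 = germ T sec res x W t2 \<and> g = germ T sec res x W (t1 + t2))"

definition germ_scale :: "'a set set \<Rightarrow> ('k \<Rightarrow> 'v \<Rightarrow> 'v) \<Rightarrow> ('a set \<Rightarrow> 'v set)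
     \<Rightarrow> ('a set \<Rightarrow> 'a set \<Rightarrow> 'v \<Rightarrow> 'v) \<Rightarrow> 'a \<Rightarrow> 'k \<Rightarrow> ('a set \<times> 'v) set \<Rightarrow> ('a set \<times> 'v) set" where
  "germ_scale T sc sec res x c g = (SOME g'. \<exists>W t. W \<in> T \<and> x \<in> W \<and> t \<in> sec W \<and>
      g = germ T sec res x W t \<and> g' = germ T sec res x W (sc c t))"

definition inv_add :: "'a set set \<Rightarrow> ('a set \<Rightarrow> 'v::ab_group_add set) \<Rightarrow> ('a set \<Rightarrow> 'a set \<Rightarrow> 'v \<Rightarrow> 'v)
     \<Rightarrow> 'a set \<Rightarrow> ('a \<Rightarrow> ('a set \<times> 'v) set) \<Rightarrow> ('a \<Rightarrow> ('a set \<times> 'v) set) \<Rightarrow> ('a \<Rightarrow> ('a set \<times> 'v) set)" where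
  "inv_add T sec res U s1 s2 = (\<lambda>x. if x \<in> U then germ_add T sec res x (s1 x) (s2 x) else {})"

definition inv_scale :: "'a set set \<Rightarrow> ('k \<Rightarrow> 'v \<Rightarrow> 'v) \<Rightarrow> ('a set \<Rightarrow> 'v set)
     \<Rightarrow> ('a set \<Rightarrow> 'a set \<Rightarrow> 'v \<Rightarrow> 'v) \<Rightarrow> 'a set \<Rightarrow> 'k \<Rightarrow> ('a \<Rightarrow> ('a set \<times> 'v) set) \<Rightarrow> ('a \<Rightarrow> ('a set \<times> 'v) set)" where
  "inv_scale T sc sec res U c s = (\<lambda>x. if x \<in> U then germ_scale T sc sec res x c (s x) else {})"

text \<open>Compatible families (s_V) indexed by V \<in> T with V \<subset>\<subset> U (extended by 0 elsewhere);
  vector space operations are componentwise in 'v.\<close>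
definition proj_lim :: "'a topology \<Rightarrow> 'a set set \<Rightarrow> ('a set \<Rightarrow> 'v::zero set)
     \<Rightarrow> ('a set \<Rightarrow> 'a set \<Rightarrow> 'v \<Rightarrow> 'v) \<Rightarrow> 'a set \<Rightarrow> ('a set \<Rightarrow> 'v) set" where
  "proj_lim X T sec res U = {f.
     (\<forall>V. V \<in> T \<and> relcomp X V U \<longrightarrow> f V \<in> sec V) \<and>
     (\<forall>V. \<not> (V \<in> T \<and> relcomp X V U) \<longrightarrow> f V = 0) \<and>
     (\<forall>V V'. V \<in> T \<and> relcomp X V U \<and> V' \<in> T \<and> relcomp X V' U \<and> V' \<subseteq> V \<longrightarrow>
        res V V' (f V) = f V')}"

end

(*
  A section of rho^{-1} F over U is given near each point by a section c of F over some W in T,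
  and may be taken with a relatively compact P \<subset>\<subset> W around the point.  Two such local
  representatives (P, W, c) and (Q, W', c') agree on P \<inter> Q: their germs coincide on W \<inter> W',
  so c and c' agree on an open covering of W \<inter> W', and since P \<inter> Q \<subset>\<subset> W \<inter> W' (LWC2),
  finitely many members cover P \<inter> Q, where the sheaf axiom for finite coverings applies.
  For V \<in> T with V \<subset>\<subset> U, finitely many representatives cover V and glue to the unique
  section over V compatible with all of them; these sections form the image in the projective limit.
  Conversely, a compatible family (f_V) determines germs on U, and choosing V \<subset>\<subset> W0 \<subset>\<subset> U (LWC3)
  shows that f_V is the section attached to these germs.
*)
theory Submission
  imports Defs
begin

lemma relcomp_subset: "relcomp X V U \<Longrightarrow> V \<subseteq> U"
  unfolding relcomp_def by blast

lemma relcomp_openin: "relcomp X V U \<Longrightarrow> openin X V \<and> openin X U"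
  unfolding relcomp_def by blast

lemma relcomp_mono_left: "relcomp X V U \<Longrightarrow> openin X W \<Longrightarrow> W \<subseteq> V \<Longrightarrow> relcomp X W U"
  unfolding relcomp_def by (metis order_trans)

lemma relcomp_mono_right:
  assumes "relcomp X V W" "W \<subseteq> U" "openin X U"
  shows "relcomp X V U"
proof -
  have VW: "openin X V" "openin X W" "V \<subseteq> W" using assms(1) by (auto simp: relcomp_def)
  have "\<exists>\<J>\<subseteq>\<U>. finite \<J> \<and> V \<subseteq> \<Union>\<J>" if "\<forall>B\<in>\<U>. openin X B" "\<Union>\<U> = U" for \<U>
  proof -
    let ?\<V> = "(\<lambda>B. B \<inter> W) ` \<U>"
    have "\<forall>B\<in>?\<V>. openin X B" using that VW by auto
    moreover have "\<Union>?\<V> = W" using that assms(2) by auto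
    ultimately obtain \<J> where \<J>: "\<J> \<subseteq> ?\<V>" "finite \<J>" "V \<subseteq> \<Union>\<J>"
      using assms(1) unfolding relcomp_def by meson
    then obtain \<J>' where "\<J>' \<subseteq> \<U>" "finite \<J>'" "\<J> = (\<lambda>B. B \<inter> W) ` \<J>'"
      by (meson finite_subset_image)
    with \<J> have "V \<subseteq> \<Union>\<J>'" by auto
    with \<open>\<J>' \<subseteq> \<U>\<close> \<open>finite \<J>'\<close> show ?thesis by blast
  qed
  then show ?thesis unfolding relcomp_def using VW assms(2,3) by blast
qed

lemma relcomp_finite_subcover:
  assumes "relcomp X V W" and "\<And>y. y \<in> W \<Longrightarrow> \<exists>D. openin X D \<and> y \<in> D \<and> D \<subseteq> W \<and> Q D"
  shows "\<exists>\<J>. finite \<J> \<and> (\<forall>D\<in>\<J>. Q D) \<and> V \<subseteq> \<Union>\<J>"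
proof -
  let ?\<D> = "{D. openin X D \<and> D \<subseteq> W \<and> Q D}"
  have "\<Union>?\<D> = W" using assms(2) by blast
  moreover have "\<forall>D\<in>?\<D>. openin X D" by blast
  ultimately obtain \<J> where "\<J> \<subseteq> ?\<D>" "finite \<J>" "V \<subseteq> \<Union>\<J>"
    using assms(1) unfolding relcomp_def by meson
  then show ?thesis by blast
qed

lemma proj_lim_sec: "f \<in> proj_lim X T sec res U \<Longrightarrow> V \<in> T \<Longrightarrow> relcomp X V U \<Longrightarrow> f V \<in> sec V"
  unfolding proj_lim_def by blast

lemma proj_lim_zero: "f \<in> proj_lim X T sec res U \<Longrightarrow> \<not> (V \<in> T \<and> relcomp X V U) \<Longrightarrow> f V = 0"
  unfolding proj_lim_def by blast

lemma proj_lim_res: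
  "f \<in> proj_lim X T sec res U \<Longrightarrow> V \<in> T \<Longrightarrow> relcomp X V U \<Longrightarrow> V' \<in> T \<Longrightarrow> relcomp X V' U \<Longrightarrow>
    V' \<subseteq> V \<Longrightarrow> res V V' (f V) = f V'"
  unfolding proj_lim_def by blast

locale tsheaf_site =
  fixes T :: "'a set set" and sc :: "'k::field \<Rightarrow> 'v::ab_group_add \<Rightarrow> 'v"
    and sec :: "'a set \<Rightarrow> 'v set" and res :: "'a set \<Rightarrow> 'a set \<Rightarrow> 'v \<Rightarrow> 'v"
  assumes inter_closed: "A \<in> T \<Longrightarrow> B \<in> T \<Longrightarrow> A \<inter> B \<in> T"
    and sheaf: "tsheaf T sc sec res"
begin

lemma presheaf: "tpresheaf T sc sec res"
  using sheaf by (simp add: tsheaf_def)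

lemma sec_add: "W \<in> T \<Longrightarrow> a \<in> sec W \<Longrightarrow> b \<in> sec W \<Longrightarrow> a + b \<in> sec W"
  using presheaf by (simp add: tpresheaf_def)

lemma sec_scale: "W \<in> T \<Longrightarrow> a \<in> sec W \<Longrightarrow> sc c a \<in> sec W"
  using presheaf by (simp add: tpresheaf_def)

lemma res_in: "W \<in> T \<Longrightarrow> W' \<in> T \<Longrightarrow> W' \<subseteq> W \<Longrightarrow> a \<in> sec W \<Longrightarrow> res W W' a \<in> sec W'"
  using presheaf by (simp add: tpresheaf_def)

lemma res_add:
  "W \<in> T \<Longrightarrow> W' \<in> T \<Longrightarrow> W' \<subseteq> W \<Longrightarrow> a \<in> sec W \<Longrightarrow> b \<in> sec W \<Longrightarrow>
    res W W' (a + b) = res W W' a + res W W' b"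
  using presheaf by (simp add: tpresheaf_def)

lemma res_scale:
  "W \<in> T \<Longrightarrow> W' \<in> T \<Longrightarrow> W' \<subseteq> W \<Longrightarrow> a \<in> sec W \<Longrightarrow> res W W' (sc c a) = sc c (res W W' a)"
  using presheaf by (simp add: tpresheaf_def)

lemma res_id: "W \<in> T \<Longrightarrow> a \<in> sec W \<Longrightarrow> res W W a = a"
  using presheaf by (simp add: tpresheaf_def)

lemma res_trans:
  "W \<in> T \<Longrightarrow> W' \<in> T \<Longrightarrow> W'' \<in> T \<Longrightarrow> W'' \<subseteq> W' \<Longrightarrow> W' \<subseteq> W \<Longrightarrow> a \<in> sec W \<Longrightarrow>
    res W' W'' (res W W' a) = res W W'' a"
  using presheaf unfolding tpresheaf_def by blast

lemma res_eq_restrict: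
  assumes "res A D a = res B D b" and "A \<in> T" "B \<in> T" "D \<in> T" "E \<in> T"
    and "E \<subseteq> D" "D \<subseteq> A \<inter> B" "a \<in> sec A" "b \<in> sec B"
  shows "res A E a = res B E b"
proof -
  have "res A E a = res D E (res A D a)" using res_trans[of A D E a] assms by auto
  also have "\<dots> = res D E (res B D b)" using assms(1) by simp
  also have "\<dots> = res B E b" using res_trans[of B D E b] assms by auto
  finally show ?thesis .
qed

lemma res_add_restrict:
  assumes "W1 \<in> T" "W2 \<in> T" "Z \<in> T" "Z \<subseteq> W1 \<inter> W2" "a \<in> sec W1" "b \<in> sec W2"
  shows "res (W1 \<inter> W2) Z (res W1 (W1 \<inter> W2) a + res W2 (W1 \<inter> W2) b) = res W1 Z a + res W2 Z b"
proof -
  have W: "W1 \<inter> W2 \<in> T" using assms inter_closed by blast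
  then show ?thesis
    using res_add[OF W assms(3,4)] res_in[OF assms(1) W _ assms(5)] res_in[OF assms(2) W _ assms(6)]
      res_trans[OF assms(1) W assms(3,4) _ assms(5)] res_trans[OF assms(2) W assms(3,4) _ assms(6)]
    by simp
qed

lemma sheaf_sep:
  assumes "W \<in> T" "\<J> \<subseteq> T" "finite \<J>" "\<Union>\<J> = W" "a \<in> sec W" "b \<in> sec W"
    and "\<And>D. D \<in> \<J> \<Longrightarrow> res W D a = res W D b"
  shows "a = b"
proof -
  have "tcovering T W \<J>" unfolding tcovering_def using assms by blast
  then show ?thesis using sheaf assms unfolding tsheaf_def by blast
qed

lemma sheaf_glue:
  assumes "W \<in> T" "\<J> \<subseteq> T" "finite \<J>" "\<Union>\<J> = W" "\<And>D. D \<in> \<J> \<Longrightarrow> f D \<in> sec D"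
    and "\<And>D D'. D \<in> \<J> \<Longrightarrow> D' \<in> \<J> \<Longrightarrow> res D (D \<inter> D') (f D) = res D' (D \<inter> D') (f D')"
  shows "\<exists>t\<in>sec W. \<forall>D\<in>\<J>. res W D t = f D"
proof -
  have "tcovering T W \<J>" unfolding tcovering_def using assms by blast
  then show ?thesis using sheaf assms unfolding tsheaf_def by blast
qed

lemma sheaf_glue_indexed:
  fixes D :: "'i \<Rightarrow> 'a set"
  assumes "W \<in> T" "finite I" "\<And>i. i \<in> I \<Longrightarrow> D i \<in> T" "(\<Union>i\<in>I. D i) = W"
    and "\<And>i. i \<in> I \<Longrightarrow> f i \<in> sec (D i)"
    and compat: "\<And>i j. i \<in> I \<Longrightarrow> j \<in> I \<Longrightarrow> res (D i) (D i \<inter> D j) (f i) = res (D j) (D i \<inter> D j) (f j)"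
  shows "\<exists>t\<in>sec W. \<forall>i\<in>I. res W (D i) t = f i"
proof -
  define g where "g E = f (SOME i. i \<in> I \<and> D i = E)" for E
  have g: "g (D i) = f i" if i: "i \<in> I" for i
  proof -
    define j where "j = (SOME j. j \<in> I \<and> D j = D i)"
    have j: "j \<in> I" "D j = D i"
      unfolding j_def using someI[of "\<lambda>j. j \<in> I \<and> D j = D i" i] i by auto
    have "f j = res (D j) (D i \<inter> D j) (f j)" using res_id[of "D j" "f j"] assms(3,5)[OF j(1)] j(2) by simp
    also have "\<dots> = res (D i) (D i \<inter> D j) (f i)" using compat[OF i j(1)] by simp
    also have "\<dots> = f i" using res_id assms(3,5) i j by simp
    finally show ?thesis unfolding g_def j_def .
  qed
  have "\<exists>t\<in>sec W. \<forall>E\<in>D ` I. res W E t = g E"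
  proof (rule sheaf_glue)
    fix E E' assume "E \<in> D ` I" "E' \<in> D ` I"
    then show "res E (E \<inter> E') (g E) = res E' (E \<inter> E') (g E')" using compat g by auto
  qed (use assms g in auto)
  then show ?thesis using g by auto
qed

lemma res_eq_of_cover:
  assumes "A \<in> T" "B \<in> T" "Z \<in> T" "Z \<subseteq> A \<inter> B" "a \<in> sec A" "b \<in> sec B"
    and "finite \<J>" "\<J> \<subseteq> T" "Z \<subseteq> \<Union>\<J>"
    and agree: "\<And>D. D \<in> \<J> \<Longrightarrow> res A (Z \<inter> D) a = res B (Z \<inter> D) b"
  shows "res A Z a = res B Z b"
proof (rule sheaf_sep[of Z "(\<inter>) Z ` \<J>"])
  fix E assume "E \<in> (\<inter>) Z ` \<J>"
  then obtain D where D: "D \<in> \<J>" "E = Z \<inter> D" by blast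
  then have "E \<in> T" using assms inter_closed by blast
  then have "res Z E (res A Z a) = res A E a" "res Z E (res B Z b) = res B E b"
    using res_trans[of A Z E a] res_trans[of B Z E b] assms D by auto
  then show "res Z E (res A Z a) = res Z E (res B Z b)" using agree D by simp
qed (use assms inter_closed res_in in auto)

abbreviation "gm \<equiv> germ T sec res"

lemma germ_self: "W \<in> T \<Longrightarrow> y \<in> W \<Longrightarrow> t \<in> sec W \<Longrightarrow> (W, t) \<in> gm y W t"
  unfolding germ_def using res_id by auto

lemma germ_restrict:
  assumes "W \<in> T" "W0 \<in> T" "W0 \<subseteq> W" "y \<in> W0" "t \<in> sec W"
  shows "gm y W0 (res W W0 t) = gm y W t"
proof (intro set_eqI iffI)
  fix p assume "p \<in> gm y W t"
  then obtain W' t' D where p: "p = (W', t')" "W' \<in> T" "y \<in> W'" "t' \<in> sec W'"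
    and D: "D \<in> T" "y \<in> D" "D \<subseteq> W \<inter> W'" "res W D t = res W' D t'"
    unfolding germ_def by blast
  have DT: "D \<inter> W0 \<in> T" using inter_closed D assms by blast
  have "res W0 (D \<inter> W0) (res W W0 t) = res W (D \<inter> W0) t"
    using res_trans[of W W0 "D \<inter> W0" t] assms DT by auto
  also have "\<dots> = res W' (D \<inter> W0) t'"
    using res_eq_restrict[OF D(4)] assms D DT p by auto
  finally show "p \<in> gm y W0 (res W W0 t)"
    unfolding germ_def using p D DT assms by blast
next
  fix p assume "p \<in> gm y W0 (res W W0 t)"
  then obtain W' t' D where p: "p = (W', t')" "W' \<in> T" "y \<in> W'" "t' \<in> sec W'"
    and D: "D \<in> T" "y \<in> D" "D \<subseteq> W0 \<inter> W'" "res W0 D (res W W0 t) = res W' D t'"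
    unfolding germ_def by blast
  have "res W D t = res W' D t'" using res_trans[of W W0 D t] assms D by auto
  then show "p \<in> gm y W t" unfolding germ_def using p D assms by blast
qed

lemma germ_eq_iff:
  assumes "W \<in> T" "W' \<in> T" "y \<in> W" "y \<in> W'" "a \<in> sec W" "b \<in> sec W'"
  shows "gm y W a = gm y W' b \<longleftrightarrow> (\<exists>D\<in>T. y \<in> D \<and> D \<subseteq> W \<inter> W' \<and> res W D a = res W' D b)"
proof
  assume "gm y W a = gm y W' b"
  then have "(W', b) \<in> gm y W a" using germ_self assms by simp
  then show "\<exists>D\<in>T. y \<in> D \<and> D \<subseteq> W \<inter> W' \<and> res W D a = res W' D b"
    unfolding germ_def by auto
next
  assume "\<exists>D\<in>T. y \<in> D \<and> D \<subseteq> W \<inter> W' \<and> res W D a = res W' D b"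
  then obtain D where "D \<in> T" "y \<in> D" "D \<subseteq> W \<inter> W'" "res W D a = res W' D b" by blast
  then show "gm y W a = gm y W' b"
    using germ_restrict[of W D y a] germ_restrict[of W' D y b] assms by auto
qed

lemma germ_add_germs:
  assumes "W \<in> T" "y \<in> W" "a \<in> sec W" "b \<in> sec W"
  shows "germ_add T sec res y (gm y W a) (gm y W b) = gm y W (a + b)"
proof -
  let ?P = "\<lambda>g. \<exists>W' t1 t2. W' \<in> T \<and> y \<in> W' \<and> t1 \<in> sec W' \<and> t2 \<in> sec W' \<and>
      gm y W a = gm y W' t1 \<and> gm y W b = gm y W' t2 \<and> g = gm y W' (t1 + t2)"
  have "\<exists>g. ?P g" using assms by blast
  then have "?P (germ_add T sec res y (gm y W a) (gm y W b))"
    unfolding germ_add_def by (rule someI_ex)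
  then obtain W' t1 t2 where W': "W' \<in> T" "y \<in> W'" "t1 \<in> sec W'" "t2 \<in> sec W'"
    and eq: "gm y W a = gm y W' t1" "gm y W b = gm y W' t2"
    and g: "germ_add T sec res y (gm y W a) (gm y W b) = gm y W' (t1 + t2)"
    by (elim exE conjE) (rule that)
  obtain D1 where D1: "D1 \<in> T" "y \<in> D1" "D1 \<subseteq> W \<inter> W'" "res W D1 a = res W' D1 t1"
    using germ_eq_iff[OF assms(1) W'(1) assms(2) W'(2) assms(3) W'(3), THEN iffD1, OF eq(1)] by blast
  obtain D2 where D2: "D2 \<in> T" "y \<in> D2" "D2 \<subseteq> W \<inter> W'" "res W D2 b = res W' D2 t2"
    using germ_eq_iff[OF assms(1) W'(1) assms(2) W'(2) assms(4) W'(4), THEN iffD1, OF eq(2)] by blast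
  let ?D = "D1 \<inter> D2"
  have D: "?D \<in> T" "?D \<subseteq> W" "?D \<subseteq> W'" using inter_closed D1 D2 by auto
  have "res W ?D a = res W' ?D t1"
    by (rule res_eq_restrict[OF D1(4) assms(1) W'(1) D1(1) D(1) _ D1(3) assms(3) W'(3)]) blast
  moreover have "res W ?D b = res W' ?D t2"
    by (rule res_eq_restrict[OF D2(4) assms(1) W'(1) D2(1) D(1) _ D2(3) assms(4) W'(4)]) blast
  ultimately have "res W ?D (a + b) = res W' ?D (t1 + t2)"
    using res_add[OF assms(1) D(1,2) assms(3,4)] res_add[OF W'(1) D(1,3) W'(3,4)] by simp
  then have "gm y W (a + b) = gm y W' (t1 + t2)"
    using D D1(2) D2(2)
    by (intro germ_eq_iff[OF assms(1) W'(1) assms(2) W'(2) sec_add[OF assms(1,3,4)] sec_add[OF W'(1,3,4)],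
          THEN iffD2] bexI[of _ ?D]) auto
  then show ?thesis using g by simp
qed

lemma germ_scale_germ:
  assumes "W \<in> T" "y \<in> W" "a \<in> sec W"
  shows "germ_scale T sc sec res y k (gm y W a) = gm y W (sc k a)"
proof -
  let ?P = "\<lambda>g. \<exists>W' t. W' \<in> T \<and> y \<in> W' \<and> t \<in> sec W' \<and> gm y W a = gm y W' t \<and> g = gm y W' (sc k t)"
  have "\<exists>g. ?P g" using assms by blast
  then have "?P (germ_scale T sc sec res y k (gm y W a))"
    unfolding germ_scale_def by (rule someI_ex)
  then obtain W' t where W': "W' \<in> T" "y \<in> W'" "t \<in> sec W'" and eq: "gm y W a = gm y W' t"
    and g: "germ_scale T sc sec res y k (gm y W a) = gm y W' (sc k t)"
    by (elim exE conjE) (rule that)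
  obtain D where D: "D \<in> T" "y \<in> D" "D \<subseteq> W \<inter> W'" "res W D a = res W' D t"
    using germ_eq_iff[OF assms(1) W'(1) assms(2) W'(2) assms(3) W'(3), THEN iffD1, OF eq] by blast
  then have "res W D (sc k a) = res W' D (sc k t)"
    using res_scale[of W D a k] res_scale[of W' D t k] assms W' by auto
  then have "gm y W (sc k a) = gm y W' (sc k t)"
    using D
    by (intro germ_eq_iff[OF assms(1) W'(1) assms(2) W'(2) sec_scale[OF assms(1,3)] sec_scale[OF W'(1,3)],
          THEN iffD2] bexI[of _ D]) auto
  then show ?thesis using g by simp
qed

end

locale lwqc_tsheaf = tsheaf_site T sc sec res
  for T :: "'a set set" and sc :: "'k::field \<Rightarrow> 'v::ab_group_add \<Rightarrow> 'v" and sec res +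
  fixes X :: "'a topology" and U :: "'a set"
  assumes vs: "vector_space sc" and tspace: "tspace X T" and lwqc: "loc_weakly_qc X"
    and U_open: "openin X U"
begin

lemma T_open: "W \<in> T \<Longrightarrow> openin X W"
  using tspace by (auto simp: tspace_def)

lemma T_basis: "openin X A \<Longrightarrow> x \<in> A \<Longrightarrow> \<exists>W\<in>T. x \<in> W \<and> W \<subseteq> A"
  using tspace unfolding tspace_def by blast

lemma T_relcomp_nhd:
  assumes "openin X A" "x \<in> A"
  shows "\<exists>V\<in>T. relcomp X V A \<and> x \<in> V"
proof -
  obtain V0 where V0: "relcomp X V0 A" "x \<in> V0"
    using lwqc assms unfolding loc_weakly_qc_def by blast
  then obtain V where V: "V \<in> T" "x \<in> V" "V \<subseteq> V0"
    using T_basis relcomp_openin by meson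
  then show ?thesis using relcomp_mono_left[OF V0(1) T_open] by blast
qed

lemma relcomp_Int: "relcomp X P W \<Longrightarrow> relcomp X Q W' \<Longrightarrow> relcomp X (P \<inter> Q) (W \<inter> W')"
  using lwqc unfolding loc_weakly_qc_def by blast

lemma relcomp_interpolate: "relcomp X V A \<Longrightarrow> \<exists>W. relcomp X W A \<and> relcomp X V W"
  using lwqc unfolding loc_weakly_qc_def by blast

abbreviation "inv_secs \<equiv> inv_sections T sec res U"

definition local_rep where
  "local_rep s P W c \<longleftrightarrow> P \<in> T \<and> W \<in> T \<and> relcomp X P W \<and> W \<subseteq> U \<and> c \<in> sec W \<and>
     (\<forall>y\<in>W. s y = gm y W c)"

lemma local_repD:
  "local_rep s P W c \<Longrightarrow> P \<in> T \<and> W \<in> T \<and> P \<subseteq> W \<and> W \<subseteq> U \<and> c \<in> sec W \<and> relcomp X P W"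
  unfolding local_rep_def using relcomp_subset by blast

lemma local_rep_germ: "local_rep s P W c \<Longrightarrow> y \<in> W \<Longrightarrow> s y = gm y W c"
  unfolding local_rep_def by blast

lemma local_rep_exists:
  assumes "s \<in> inv_secs" "x \<in> U"
  shows "\<exists>P W c. local_rep s P W c \<and> x \<in> P"
proof -
  obtain W t where W: "W \<in> T" "t \<in> sec W" "x \<in> W" "W \<subseteq> U" "\<forall>y\<in>W. s y = gm y W t"
    using assms unfolding inv_sections_def by blast
  then obtain P where "P \<in> T" "relcomp X P W" "x \<in> P"
    using T_relcomp_nhd[OF T_open] by blast
  then show ?thesis using W unfolding local_rep_def by blast
qed

lemma inv_sectionsI_local_rep:
  assumes "\<And>x. x \<notin> U \<Longrightarrow> s x = {}" and "\<And>x. x \<in> U \<Longrightarrow> \<exists>P W c. local_rep s P W c \<and> x \<in> P"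
  shows "s \<in> inv_secs"
  unfolding inv_sections_def
proof (intro CollectI conjI allI impI ballI)
  fix x assume "x \<in> U"
  then obtain P W c where "local_rep s P W c" "x \<in> P" using assms(2) by blast
  then show "\<exists>W\<in>T. \<exists>t\<in>sec W. x \<in> W \<and> W \<subseteq> U \<and> (\<forall>y\<in>W. s y = gm y W t)"
    unfolding local_rep_def using relcomp_subset by blast
qed (use assms(1) in blast)

lemma local_reps_agree:
  assumes rep: "local_rep s P W c" "local_rep s Q W' c'" and Z: "Z \<in> T" "Z \<subseteq> P \<inter> Q"
  shows "res W Z c = res W' Z c'"
proof -
  note P = local_repD[OF rep(1)] and Q = local_repD[OF rep(2)]
  let ?agree = "\<lambda>D. D \<in> T \<and> D \<subseteq> W \<inter> W' \<and> res W D c = res W' D c'"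
  have loc: "\<exists>D. openin X D \<and> y \<in> D \<and> D \<subseteq> W \<inter> W' \<and> ?agree D" if y: "y \<in> W \<inter> W'" for y
  proof -
    have yW: "y \<in> W" "y \<in> W'" using y by auto
    have "gm y W c = gm y W' c'"
      using local_rep_germ[OF rep(1) yW(1)] local_rep_germ[OF rep(2) yW(2)] by (rule trans[OF sym])
    then obtain D where "D \<in> T" "y \<in> D" "D \<subseteq> W \<inter> W'" "res W D c = res W' D c'"
      using germ_eq_iff[of W W' y c c'] P Q yW by meson
    then show ?thesis using T_open by blast
  qed
  have "relcomp X (P \<inter> Q) (W \<inter> W')" using relcomp_Int P Q by blast
  then have "\<exists>\<J>. finite \<J> \<and> (\<forall>D\<in>\<J>. ?agree D) \<and> P \<inter> Q \<subseteq> \<Union>\<J>"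
    by (rule relcomp_finite_subcover) (rule loc)
  then obtain \<J> where \<J>: "finite \<J>" "\<forall>D\<in>\<J>. ?agree D" "P \<inter> Q \<subseteq> \<Union>\<J>"
    by blast
  show ?thesis
  proof (rule res_eq_of_cover[of W W' Z c c' \<J>])
    fix D assume "D \<in> \<J>"
    then have D: "D \<in> T" "D \<subseteq> W \<inter> W'" "res W D c = res W' D c'" using \<J>(2) by auto
    show "res W (Z \<inter> D) c = res W' (Z \<inter> D) c'"
      by (rule res_eq_restrict[OF D(3)]) (use P Q Z D inter_closed in auto)
  qed (use P Q Z \<J> in auto)
qed

lemma local_reps_cover:
  assumes "s \<in> inv_secs" "relcomp X V U"
  shows "\<exists>R Wf cf. finite R \<and> (\<forall>P\<in>R. local_rep s P (Wf P) (cf P)) \<and> V \<subseteq> \<Union>R"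
proof -
  have "\<exists>P. openin X P \<and> x \<in> P \<and> P \<subseteq> U \<and> (\<exists>W c. local_rep s P W c)" if x: "x \<in> U" for x
  proof -
    obtain P W c where P: "local_rep s P W c" "x \<in> P" using local_rep_exists[OF assms(1) x] by blast
    then have "openin X P" "P \<subseteq> U" using local_repD[OF P(1)] T_open by auto
    with P show ?thesis by blast
  qed
  with assms(2) have "\<exists>R. finite R \<and> (\<forall>P\<in>R. \<exists>W c. local_rep s P W c) \<and> V \<subseteq> \<Union>R"
    by (rule relcomp_finite_subcover)
  then obtain R where R: "finite R" "\<forall>P\<in>R. \<exists>W c. local_rep s P W c" "V \<subseteq> \<Union>R"
    by blast
  moreover from R(2) obtain Wf cf where "\<forall>P\<in>R. local_rep s P (Wf P) (cf P)"
    by metis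
  ultimately show ?thesis by blast
qed

text \<open>Agreeing germwise with \<open>s\<close> on \<open>V\<close> would not determine \<open>t\<close>; agreement with all local
  representatives does, because finitely many of them cover \<open>V\<close> when \<open>V \<subset>\<subset> U\<close>.\<close>
definition lim_component where
  "lim_component s V t \<longleftrightarrow> t \<in> sec V \<and>
     (\<forall>P W c. local_rep s P W c \<longrightarrow> res V (V \<inter> P) t = res W (V \<inter> P) c)"

lemma lim_component_sec: "lim_component s V t \<Longrightarrow> t \<in> sec V"
  unfolding lim_component_def by blast

lemma lim_component_restrict:
  assumes "lim_component s V t" "local_rep s P W c" "V \<in> T" "Z \<in> T" "Z \<subseteq> V \<inter> P"
  shows "res V Z t = res W Z c"
proof (rule res_eq_restrict)
  show "res V (V \<inter> P) t = res W (V \<inter> P) c"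
    using assms(1,2) unfolding lim_component_def by blast
qed (use assms local_repD[OF assms(2)] inter_closed lim_component_sec in auto)

lemma lim_componentI_cover:
  fixes Pf :: "'i \<Rightarrow> 'a set"
  assumes V: "V \<in> T" and fin: "finite I" and rep: "\<And>i. i \<in> I \<Longrightarrow> local_rep s (Pf i) (Wf i) (cf i)"
    and cov: "V \<subseteq> (\<Union>i\<in>I. Pf i)" and t: "t \<in> sec V"
    and eq: "\<And>i. i \<in> I \<Longrightarrow> res V (V \<inter> Pf i) t = res (Wf i) (V \<inter> Pf i) (cf i)"
  shows "lim_component s V t"
  unfolding lim_component_def
proof (intro conjI allI impI)
  fix P W c assume r: "local_rep s P W c"
  note PW = local_repD[OF r]
  have PfT: "Pf ` I \<subseteq> T" using rep local_repD by blast
  show "res V (V \<inter> P) t = res W (V \<inter> P) c"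
  proof (rule res_eq_of_cover[of V W "V \<inter> P" t c "Pf ` I"])
    fix D assume "D \<in> Pf ` I"
    then obtain i where i: "i \<in> I" "D = Pf i" by blast
    note Pi = local_repD[OF rep[OF i(1)]]
    have E: "V \<inter> P \<inter> D \<in> T" "V \<inter> Pf i \<in> T" using inter_closed V PW Pi i by auto
    have "res V (V \<inter> P \<inter> D) t = res (Wf i) (V \<inter> P \<inter> D) (cf i)"
      by (rule res_eq_restrict[OF eq[OF i(1)]]) (use V Pi E t i in auto)
    also have "\<dots> = res W (V \<inter> P \<inter> D) c"
      by (rule local_reps_agree[OF rep[OF i(1)] r E(1)]) (use i in auto)
    finally show "res V (V \<inter> P \<inter> D) t = res W (V \<inter> P \<inter> D) c" .
  qed (use V PW t fin cov PfT inter_closed in auto)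
qed (rule t)

lemma lim_component_unique:
  assumes "s \<in> inv_secs" "V \<in> T" "relcomp X V U" "lim_component s V t" "lim_component s V t'"
  shows "t = t'"
proof -
  obtain R Wf cf where R: "finite R" "\<forall>P\<in>R. local_rep s P (Wf P) (cf P)" "V \<subseteq> \<Union>R"
    using local_reps_cover[OF assms(1,3)] by blast
  have "res V V t = res V V t'"
  proof (rule res_eq_of_cover[of V V V t t' R])
    fix D assume "D \<in> R"
    then have r: "local_rep s D (Wf D) (cf D)" using R(2) by blast
    then have DT: "V \<inter> D \<in> T" using local_repD inter_closed assms(2) by blast
    have "res V (V \<inter> D) t = res (Wf D) (V \<inter> D) (cf D)"
      using lim_component_restrict[OF assms(4) r assms(2) DT] by simp
    also have "\<dots> = res V (V \<inter> D) t'"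
      using lim_component_restrict[OF assms(5) r assms(2) DT] by simp
    finally show "res V (V \<inter> D) t = res V (V \<inter> D) t'" .
  qed (use assms R local_repD lim_component_sec in auto)
  then show ?thesis using res_id assms(2) lim_component_sec assms(4,5) by metis
qed

lemma lim_component_exists:
  assumes "s \<in> inv_secs" "V \<in> T" "relcomp X V U"
  shows "\<exists>t. lim_component s V t"
proof -
  obtain R Wf cf where R: "finite R" "\<And>P. P \<in> R \<Longrightarrow> local_rep s P (Wf P) (cf P)" "V \<subseteq> \<Union>R"
    using local_reps_cover[OF assms(1,3)] by blast
  note rep = local_repD[OF R(2)]
  have VP: "V \<inter> P \<in> T" if "P \<in> R" for P using inter_closed assms(2) rep[OF that] by blast
  have "\<exists>t\<in>sec V. \<forall>P\<in>R. res V (V \<inter> P) t = res (Wf P) (V \<inter> P) (cf P)"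
  proof (rule sheaf_glue_indexed)
    fix P P' assume P: "P \<in> R" "P' \<in> R"
    let ?E = "V \<inter> P \<inter> (V \<inter> P')"
    have E: "?E \<in> T" using inter_closed VP P by blast
    have "res (V \<inter> P) ?E (res (Wf P) (V \<inter> P) (cf P)) = res (Wf P) ?E (cf P)"
      by (rule res_trans) (use rep[OF P(1)] VP[OF P(1)] E in auto)
    also have "\<dots> = res (Wf P') ?E (cf P')"
      by (rule local_reps_agree[OF R(2) R(2) E]) (use P in auto)
    also have "\<dots> = res (V \<inter> P') ?E (res (Wf P') (V \<inter> P') (cf P'))"
      by (rule res_trans[symmetric]) (use rep[OF P(2)] VP[OF P(2)] E in auto)
    finally show "res (V \<inter> P) ?E (res (Wf P) (V \<inter> P) (cf P)) =
      res (V \<inter> P') ?E (res (Wf P') (V \<inter> P') (cf P'))" .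
  next
    fix P assume "P \<in> R"
    then show "res (Wf P) (V \<inter> P) (cf P) \<in> sec (V \<inter> P)"
      using res_in rep VP by blast
  qed (use assms R VP in auto)
  then obtain t where "t \<in> sec V" "\<And>P. P \<in> R \<Longrightarrow> res V (V \<inter> P) t = res (Wf P) (V \<inter> P) (cf P)"
    by blast
  then have "lim_component s V t"
    by (intro lim_componentI_cover[where Pf = "\<lambda>P. P" and I = R and Wf = Wf and cf = cf])
      (use assms(2) R in auto)
  then show ?thesis ..
qed

definition to_lim where
  "to_lim s V = (if V \<in> T \<and> relcomp X V U then THE t. lim_component s V t else 0)"

lemma to_lim_component:
  assumes "s \<in> inv_secs" "V \<in> T" "relcomp X V U"
  shows "lim_component s V (to_lim s V)"
proof -
  have "\<exists>!t. lim_component s V t"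
    using lim_component_exists[OF assms] lim_component_unique[OF assms] by blast
  then show ?thesis unfolding to_lim_def using assms(2,3) by (simp add: theI')
qed

lemma to_lim_eq:
  "s \<in> inv_secs \<Longrightarrow> V \<in> T \<Longrightarrow> relcomp X V U \<Longrightarrow> lim_component s V t \<Longrightarrow> to_lim s V = t"
  using lim_component_unique to_lim_component by blast

lemma to_lim_outside: "\<not> (V \<in> T \<and> relcomp X V U) \<Longrightarrow> to_lim s V = 0"
  unfolding to_lim_def by (simp only: if_False)

lemma lim_component_res:
  assumes c: "lim_component s V t" and V: "V \<in> T" "V' \<in> T" "V' \<subseteq> V"
  shows "lim_component s V' (res V V' t)"
  unfolding lim_component_def
proof (intro conjI allI impI)
  show "res V V' t \<in> sec V'" using res_in V lim_component_sec[OF c] by blast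
  fix P W c' assume r: "local_rep s P W c'"
  have PV: "V' \<inter> P \<in> T" using inter_closed V local_repD[OF r] by blast
  have "res V' (V' \<inter> P) (res V V' t) = res V (V' \<inter> P) t"
    using res_trans[of V V' "V' \<inter> P" t] V PV lim_component_sec[OF c] by auto
  also have "\<dots> = res W (V' \<inter> P) c'"
    using lim_component_restrict[OF c r _ PV] V by auto
  finally show "res V' (V' \<inter> P) (res V V' t) = res W (V' \<inter> P) c'" .
qed

lemma to_lim_in_proj_lim:
  assumes s: "s \<in> inv_secs"
  shows "to_lim s \<in> proj_lim X T sec res U"
  unfolding proj_lim_def
proof (intro CollectI conjI allI impI)
  fix V assume "V \<in> T \<and> relcomp X V U"
  then show "to_lim s V \<in> sec V" using to_lim_component[OF s] lim_component_sec by blast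
next
  fix V assume "\<not> (V \<in> T \<and> relcomp X V U)"
  then show "to_lim s V = 0" by (rule to_lim_outside)
next
  fix V V' assume V: "V \<in> T \<and> relcomp X V U \<and> V' \<in> T \<and> relcomp X V' U \<and> V' \<subseteq> V"
  then have "lim_component s V' (res V V' (to_lim s V))"
    using lim_component_res to_lim_component[OF s] by blast
  then show "res V V' (to_lim s V) = to_lim s V'" using to_lim_eq[OF s] V by metis
qed

lemma to_lim_inj:
  assumes s1: "s1 \<in> inv_secs" and s2: "s2 \<in> inv_secs" and eq: "to_lim s1 = to_lim s2"
  shows "s1 = s2"
proof
  fix x show "s1 x = s2 x"
  proof (cases "x \<in> U")
    case False
    then show ?thesis using s1 s2 unfolding inv_sections_def by simp
  next
    case True
    obtain P1 W1 a where r1: "local_rep s1 P1 W1 a" "x \<in> P1" using local_rep_exists[OF s1 True] by blast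
    obtain P2 W2 b where r2: "local_rep s2 P2 W2 b" "x \<in> P2" using local_rep_exists[OF s2 True] by blast
    note d1 = local_repD[OF r1(1)] and d2 = local_repD[OF r2(1)]
    let ?V = "P1 \<inter> P2"
    have VT: "?V \<in> T" using inter_closed d1 d2 by blast
    have "relcomp X ?V W1" using relcomp_mono_left[OF _ T_open[OF VT]] d1 by blast
    then have rcV: "relcomp X ?V U" using relcomp_mono_right U_open d1 by blast
    have c1: "lim_component s1 ?V (to_lim s1 ?V)" using to_lim_component[OF s1 VT rcV] .
    have c2: "lim_component s2 ?V (to_lim s1 ?V)" using to_lim_component[OF s2 VT rcV] eq by simp
    have e1: "to_lim s1 ?V = res W1 ?V a"
      using lim_component_restrict[OF c1 r1(1) VT VT] res_id[OF VT lim_component_sec[OF c1]] by auto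
    have e2: "to_lim s1 ?V = res W2 ?V b"
      using lim_component_restrict[OF c2 r2(1) VT VT] res_id[OF VT lim_component_sec[OF c2]] by auto
    have xV: "x \<in> ?V" "x \<in> W1" "x \<in> W2" using r1 r2 d1 d2 by auto
    have "s1 x = gm x W1 a" using local_rep_germ[OF r1(1) xV(2)] .
    also have "\<dots> = gm x ?V (res W1 ?V a)" using germ_restrict[of W1 ?V x a] d1 VT xV by auto
    also have "\<dots> = gm x ?V (res W2 ?V b)" using e1 e2 by simp
    also have "\<dots> = gm x W2 b" using germ_restrict[of W2 ?V x b] d2 VT xV by auto
    also have "\<dots> = s2 x" using local_rep_germ[OF r2(1) xV(3)] by simp
    finally show ?thesis .
  qed
qed

lemma proj_lim_germ_indep:
  assumes f: "f \<in> proj_lim X T sec res U"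
    and V: "V \<in> T" "relcomp X V U" and V': "V' \<in> T" "relcomp X V' U" and x: "x \<in> V" "x \<in> V'"
  shows "gm x V (f V) = gm x V' (f V')"
proof -
  have VV: "V \<inter> V' \<in> T" "relcomp X (V \<inter> V') U"
    using inter_closed V V' relcomp_mono_left[OF V(2) T_open] by auto
  have "gm x V (f V) = gm x (V \<inter> V') (res V (V \<inter> V') (f V))"
    using germ_restrict[of V "V \<inter> V'" x "f V"] VV V x proj_lim_sec[OF f] by auto
  also have "\<dots> = gm x (V \<inter> V') (res V' (V \<inter> V') (f V'))"
    using proj_lim_res[OF f V VV] proj_lim_res[OF f V' VV] by simp
  also have "\<dots> = gm x V' (f V')"
    using germ_restrict[of V' "V \<inter> V'" x "f V'"] VV V' x proj_lim_sec[OF f] by auto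
  finally show ?thesis .
qed

definition lim_section where
  "lim_section f x = (if x \<in> U then
     (let V = SOME V. V \<in> T \<and> relcomp X V U \<and> x \<in> V in gm x V (f V)) else {})"

lemma lim_section_germ:
  assumes f: "f \<in> proj_lim X T sec res U" and V: "V \<in> T" "relcomp X V U" "x \<in> V"
  shows "lim_section f x = gm x V (f V)"
proof -
  have x: "x \<in> U" using V relcomp_subset by blast
  let ?P = "\<lambda>V. V \<in> T \<and> relcomp X V U \<and> x \<in> V"
  obtain V0 where "?P V0" using T_relcomp_nhd[OF U_open x] by blast
  then have V': "?P (SOME V. ?P V)" by (rule someI)
  have "lim_section f x = gm x (SOME V. ?P V) (f (SOME V. ?P V))"
    unfolding lim_section_def Let_def using x by simp
  also have "\<dots> = gm x V (f V)"
    using V' by (intro proj_lim_germ_indep[OF f _ _ V(1,2) _ V(3)]) auto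
  finally show ?thesis .
qed

lemma lim_section_in:
  assumes f: "f \<in> proj_lim X T sec res U"
  shows "lim_section f \<in> inv_secs"
  unfolding inv_sections_def
proof (intro CollectI conjI allI impI ballI)
  fix x assume "x \<in> U"
  then obtain V where V: "V \<in> T" "relcomp X V U" "x \<in> V" using T_relcomp_nhd U_open by blast
  moreover have "\<forall>y\<in>V. lim_section f y = gm y V (f V)" using lim_section_germ[OF f V(1,2)] by blast
  ultimately show "\<exists>W\<in>T. \<exists>t\<in>sec W. x \<in> W \<and> W \<subseteq> U \<and> (\<forall>y\<in>W. lim_section f y = gm y W t)"
    using proj_lim_sec[OF f V(1,2)] relcomp_subset[OF V(2)] by blast
qed (simp add: lim_section_def)

lemma lim_section_local_agree:
  assumes f: "f \<in> proj_lim X T sec res U" and r: "local_rep (lim_section f) P W c"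
    and W0: "relcomp X W0 U" and y: "y \<in> W0 \<inter> W"
  shows "\<exists>D\<in>T. y \<in> D \<and> D \<subseteq> W0 \<inter> W \<and> relcomp X D U \<and> f D = res W D c"
proof -
  note d = local_repD[OF r]
  obtain Q where Q: "Q \<in> T" "y \<in> Q" "Q \<subseteq> W0 \<inter> W"
    using T_basis[of "W0 \<inter> W" y] relcomp_openin[OF W0] d T_open y by blast
  have rcQ: "relcomp X Q U" using relcomp_mono_left[OF W0 T_open[OF Q(1)]] Q by blast
  have "gm y Q (f Q) = gm y W c"
    using lim_section_germ[OF f Q(1) rcQ Q(2)] local_rep_germ[OF r, of y] y by simp
  then obtain D where D: "D \<in> T" "y \<in> D" "D \<subseteq> Q \<inter> W" "res Q D (f Q) = res W D c"
    using germ_eq_iff[OF Q(1) _ Q(2) _ proj_lim_sec[OF f Q(1) rcQ], of W c] y d by auto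
  have rcD: "relcomp X D U" using relcomp_mono_left[OF rcQ T_open[OF D(1)]] D by blast
  have "f D = res W D c" using proj_lim_res[OF f Q(1) rcQ D(1) rcD] D by auto
  then show ?thesis using D Q rcD by blast
qed

lemma lim_component_lim_section:
  assumes f: "f \<in> proj_lim X T sec res U" and V: "V \<in> T" "relcomp X V U"
  shows "lim_component (lim_section f) V (f V)"
  unfolding lim_component_def
proof (intro conjI allI impI)
  show fV: "f V \<in> sec V" using proj_lim_sec[OF f V] .
  fix P W c assume r: "local_rep (lim_section f) P W c"
  note d = local_repD[OF r]
  obtain W0 where W0: "relcomp X W0 U" "relcomp X V W0" using relcomp_interpolate[OF V(2)] by blast
  let ?good = "\<lambda>D. D \<in> T \<and> relcomp X D U \<and> D \<subseteq> W \<and> f D = res W D c"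
  have "\<exists>D. openin X D \<and> y \<in> D \<and> D \<subseteq> W0 \<inter> W \<and> ?good D" if "y \<in> W0 \<inter> W" for y
    using lim_section_local_agree[OF f r W0(1) that] T_open by blast
  with relcomp_Int[OF W0(2), of P W] d
  have "\<exists>\<J>. finite \<J> \<and> (\<forall>D\<in>\<J>. ?good D) \<and> V \<inter> P \<subseteq> \<Union>\<J>"
    by (intro relcomp_finite_subcover) auto
  then obtain \<J> where \<J>: "finite \<J>" "\<forall>D\<in>\<J>. ?good D" "V \<inter> P \<subseteq> \<Union>\<J>" by blast
  have VP: "V \<inter> P \<in> T" using inter_closed V d by blast
  show "res V (V \<inter> P) (f V) = res W (V \<inter> P) c"
  proof (rule res_eq_of_cover[of V W "V \<inter> P" "f V" c \<J>])
    fix D assume "D \<in> \<J>"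
    then have D: "D \<in> T" "relcomp X D U" "D \<subseteq> W" "f D = res W D c" using \<J>(2) by auto
    let ?E = "V \<inter> P \<inter> D"
    have E: "?E \<in> T" "relcomp X ?E U"
      using inter_closed VP D relcomp_mono_left[OF V(2) T_open] by auto
    have "res V ?E (f V) = f ?E" using proj_lim_res[OF f V E] by auto
    also have "\<dots> = res D ?E (f D)" using proj_lim_res[OF f D(1,2) E] by auto
    also have "\<dots> = res W ?E c" using res_trans[of W D ?E c] D E d by auto
    finally show "res V ?E (f V) = res W ?E c" .
  qed (use V d fV VP \<J> in auto)
qed

lemma to_lim_surj:
  assumes f: "f \<in> proj_lim X T sec res U"
  shows "to_lim (lim_section f) = f"
proof
  fix V show "to_lim (lim_section f) V = f V"
  proof (cases "V \<in> T \<and> relcomp X V U")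
    case True
    then show ?thesis
      using to_lim_eq[OF lim_section_in[OF f] _ _ lim_component_lim_section[OF f]] by blast
  next
    case False
    then show ?thesis using to_lim_outside proj_lim_zero[OF f] by metis
  qed
qed

lemma to_lim_image: "to_lim ` inv_secs = proj_lim X T sec res U"
proof
  show "to_lim ` inv_secs \<subseteq> proj_lim X T sec res U" using to_lim_in_proj_lim by blast
  show "proj_lim X T sec res U \<subseteq> to_lim ` inv_secs"
  proof
    fix f assume f: "f \<in> proj_lim X T sec res U"
    show "f \<in> to_lim ` inv_secs"
      using image_eqI[of f to_lim, OF to_lim_surj[OF f, symmetric] lim_section_in[OF f]] .
  qed
qed

abbreviation "inv_add_U \<equiv> inv_add T sec res U"
abbreviation "inv_scale_U \<equiv> inv_scale T sc sec res U"

lemma local_rep_add: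
  assumes r1: "local_rep s1 P1 W1 a" and r2: "local_rep s2 P2 W2 b"
  shows "local_rep (inv_add_U s1 s2) (P1 \<inter> P2) (W1 \<inter> W2) (res W1 (W1 \<inter> W2) a + res W2 (W1 \<inter> W2) b)"
proof -
  note d1 = local_repD[OF r1] and d2 = local_repD[OF r2]
  let ?W = "W1 \<inter> W2"
  have W: "?W \<in> T" using inter_closed d1 d2 by blast
  have ab: "res W1 ?W a \<in> sec ?W" "res W2 ?W b \<in> sec ?W" using res_in W d1 d2 by auto
  have "inv_add_U s1 s2 y = gm y ?W (res W1 ?W a + res W2 ?W b)" if y: "y \<in> ?W" for y
  proof -
    have "s1 y = gm y ?W (res W1 ?W a)"
      using local_rep_germ[OF r1, of y] germ_restrict[of W1 ?W y a] d1 W y by simp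
    moreover have "s2 y = gm y ?W (res W2 ?W b)"
      using local_rep_germ[OF r2, of y] germ_restrict[of W2 ?W y b] d2 W y by simp
    moreover have "y \<in> U" using y d1 by blast
    ultimately show ?thesis unfolding inv_add_def using germ_add_germs[OF W y ab] by simp
  qed
  then show ?thesis
    unfolding local_rep_def using inter_closed relcomp_Int d1 d2 W sec_add[OF W ab] by blast
qed

lemma local_rep_scale:
  assumes r: "local_rep s P W a"
  shows "local_rep (inv_scale_U k s) P W (sc k a)"
proof -
  note d = local_repD[OF r]
  have "inv_scale_U k s y = gm y W (sc k a)" if y: "y \<in> W" for y
    using local_rep_germ[OF r y] germ_scale_germ[of W y a k] d y unfolding inv_scale_def by auto
  then show ?thesis unfolding local_rep_def using d sec_scale by blast
qed

lemma inv_add_in: "s1 \<in> inv_secs \<Longrightarrow> s2 \<in> inv_secs \<Longrightarrow> inv_add_U s1 s2 \<in> inv_secs"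
proof (rule inv_sectionsI_local_rep)
  fix x assume "s1 \<in> inv_secs" "s2 \<in> inv_secs" "x \<in> U"
  then obtain P1 W1 a P2 W2 b where "local_rep s1 P1 W1 a" "x \<in> P1" "local_rep s2 P2 W2 b" "x \<in> P2"
    using local_rep_exists by metis
  then show "\<exists>P W c. local_rep (inv_add_U s1 s2) P W c \<and> x \<in> P"
    using local_rep_add by blast
qed (simp add: inv_add_def)

lemma inv_scale_in: "s \<in> inv_secs \<Longrightarrow> inv_scale_U k s \<in> inv_secs"
proof (rule inv_sectionsI_local_rep)
  fix x assume "s \<in> inv_secs" "x \<in> U"
  then obtain P W a where "local_rep s P W a" "x \<in> P" using local_rep_exists by metis
  then show "\<exists>P W c. local_rep (inv_scale_U k s) P W c \<and> x \<in> P"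
    using local_rep_scale by blast
qed (simp add: inv_scale_def)

lemma lim_component_add:
  assumes s: "s1 \<in> inv_secs" "s2 \<in> inv_secs" and V: "V \<in> T" "relcomp X V U"
    and c: "lim_component s1 V t1" "lim_component s2 V t2"
  shows "lim_component (inv_add_U s1 s2) V (t1 + t2)"
proof -
  obtain R1 Wf1 cf1 where R1: "finite R1" "\<forall>P\<in>R1. local_rep s1 P (Wf1 P) (cf1 P)" "V \<subseteq> \<Union>R1"
    using local_reps_cover[OF s(1) V(2)] by blast
  obtain R2 Wf2 cf2 where R2: "finite R2" "\<forall>P\<in>R2. local_rep s2 P (Wf2 P) (cf2 P)" "V \<subseteq> \<Union>R2"
    using local_reps_cover[OF s(2) V(2)] by blast
  define Wf where "Wf i = Wf1 (fst i) \<inter> Wf2 (snd i)" for i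
  define cf where "cf i = res (Wf1 (fst i)) (Wf i) (cf1 (fst i)) + res (Wf2 (snd i)) (Wf i) (cf2 (snd i))"
    for i
  show ?thesis
  proof (rule lim_componentI_cover[where I = "R1 \<times> R2" and Pf = "\<lambda>i. fst i \<inter> snd i" and Wf = Wf and cf = cf])
    fix i assume "i \<in> R1 \<times> R2"
    then obtain P1 P2 where i: "i = (P1, P2)" and r: "local_rep s1 P1 (Wf1 P1) (cf1 P1)"
      "local_rep s2 P2 (Wf2 P2) (cf2 P2)" using R1(2) R2(2) by (cases i) auto
    show "local_rep (inv_add_U s1 s2) (fst i \<inter> snd i) (Wf i) (cf i)"
      unfolding Wf_def cf_def i fst_conv snd_conv by (rule local_rep_add[OF r])
    note d1 = local_repD[OF r(1)] and d2 = local_repD[OF r(2)]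
    let ?Z = "V \<inter> (P1 \<inter> P2)"
    have Z: "?Z \<in> T" using inter_closed[OF V(1) inter_closed] d1 d2 by blast
    have "res V ?Z (t1 + t2) = res V ?Z t1 + res V ?Z t2"
      using res_add[OF V(1) Z _ lim_component_sec[OF c(1)] lim_component_sec[OF c(2)]] by blast
    also have "\<dots> = res (Wf1 P1) ?Z (cf1 P1) + res (Wf2 P2) ?Z (cf2 P2)"
      using lim_component_restrict[OF c(1) r(1) V(1) Z] lim_component_restrict[OF c(2) r(2) V(1) Z]
      by (simp add: Int_lower1 le_infI2)
    also have "\<dots> = res (Wf i) ?Z (cf i)"
      unfolding Wf_def cf_def i fst_conv snd_conv
      by (rule res_add_restrict[symmetric]) (use d1 d2 Z in auto)
    finally show "res V (V \<inter> (fst i \<inter> snd i)) (t1 + t2) = res (Wf i) (V \<inter> (fst i \<inter> snd i)) (cf i)"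
      using i by simp
  next
    show "V \<subseteq> (\<Union>i\<in>R1 \<times> R2. fst i \<inter> snd i)"
    proof
      fix v assume "v \<in> V"
      then obtain P1 P2 where "P1 \<in> R1" "P2 \<in> R2" "v \<in> P1" "v \<in> P2" using R1(3) R2(3) by blast
      then show "v \<in> (\<Union>i\<in>R1 \<times> R2. fst i \<inter> snd i)" by force
    qed
  qed (use V R1 R2 sec_add lim_component_sec c in auto)
qed

lemma lim_component_scale:
  assumes s: "s \<in> inv_secs" and V: "V \<in> T" "relcomp X V U" and c: "lim_component s V t"
  shows "lim_component (inv_scale_U k s) V (sc k t)"
proof -
  obtain R Wf cf where R: "finite R" "\<forall>P\<in>R. local_rep s P (Wf P) (cf P)" "V \<subseteq> \<Union>R"
    using local_reps_cover[OF s V(2)] by blast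
  show ?thesis
  proof (rule lim_componentI_cover[where I = R and Pf = "\<lambda>P. P" and Wf = Wf and cf = "\<lambda>P. sc k (cf P)"])
    fix P assume "P \<in> R"
    then have r: "local_rep s P (Wf P) (cf P)" using R(2) by blast
    then show "local_rep (inv_scale_U k s) P (Wf P) (sc k (cf P))" by (rule local_rep_scale)
    note d = local_repD[OF r]
    have Z: "V \<inter> P \<in> T" using inter_closed V d by blast
    have "res V (V \<inter> P) (sc k t) = sc k (res V (V \<inter> P) t)"
      using res_scale[OF V(1) Z _ lim_component_sec[OF c]] by blast
    also have "\<dots> = sc k (res (Wf P) (V \<inter> P) (cf P))"
      using lim_component_restrict[OF c r V(1) Z] by simp
    also have "\<dots> = res (Wf P) (V \<inter> P) (sc k (cf P))"
      by (rule res_scale[symmetric]) (use d Z in auto)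
    finally show "res V (V \<inter> P) (sc k t) = res (Wf P) (V \<inter> P) (sc k (cf P))" .
  qed (use V R sec_scale lim_component_sec c in auto)
qed

lemma to_lim_add:
  assumes "s1 \<in> inv_secs" "s2 \<in> inv_secs"
  shows "to_lim (inv_add_U s1 s2) = (\<lambda>V. to_lim s1 V + to_lim s2 V)"
proof
  fix V show "to_lim (inv_add_U s1 s2) V = to_lim s1 V + to_lim s2 V"
  proof (cases "V \<in> T \<and> relcomp X V U")
    case True
    then show ?thesis
      by (intro to_lim_eq inv_add_in lim_component_add to_lim_component) (use assms in auto)
  qed (simp add: to_lim_outside)
qed

lemma to_lim_scale:
  assumes "s \<in> inv_secs"
  shows "to_lim (inv_scale_U k s) = (\<lambda>V. sc k (to_lim s V))"
proof
  fix V show "to_lim (inv_scale_U k s) V = sc k (to_lim s V)"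
  proof (cases "V \<in> T \<and> relcomp X V U")
    case True
    then show ?thesis
      by (intro to_lim_eq inv_scale_in lim_component_scale to_lim_component) (use assms in auto)
  qed (simp add: to_lim_outside module.scale_zero_right[OF vs[folded module_iff_vector_space]])
qed

end

theorem mainTheorem8:
  fixes X :: "'a topology" and T :: "'a set set"
    and sc :: "'k::field \<Rightarrow> 'v::ab_group_add \<Rightarrow> 'v"
    and sec :: "'a set \<Rightarrow> 'v set" and res :: "'a set \<Rightarrow> 'a set \<Rightarrow> 'v \<Rightarrow> 'v"
    and U :: "'a set"
  assumes "vector_space sc"
    and "tspace X T"
    and "loc_weakly_qc X"
    and "tsheaf T sc sec res"
    and "openin X U"
  shows "\<exists>\<phi>. bij_betw \<phi> (inv_sections T sec res U) (proj_lim X T sec res U) \<and>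
           (\<forall>s1\<in>inv_sections T sec res U. \<forall>s2\<in>inv_sections T sec res U.
              \<phi> (inv_add T sec res U s1 s2) = (\<lambda>V. \<phi> s1 V + \<phi> s2 V)) \<and>
           (\<forall>c. \<forall>s\<in>inv_sections T sec res U.
              \<phi> (inv_scale T sc sec res U c s) = (\<lambda>V. sc c (\<phi> s V)))"
proof -
  interpret lwqc_tsheaf T sc sec res X U
    using assms by (intro lwqc_tsheaf.intro tsheaf_site.intro lwqc_tsheaf_axioms.intro) (auto simp: tspace_def)
  have "bij_betw to_lim inv_secs (proj_lim X T sec res U)"
    by (rule bij_betw_imageI[OF inj_onI[OF to_lim_inj] to_lim_image])
  then show ?thesis
    by (intro exI[of _ to_lim] conjI ballI allI) (simp_all add: to_lim_add to_lim_scale)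
qed

end
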